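(* Let $\{(\mathcal{X}_i,\mathring{\mathcal{X}}_i,p_i)\}_{i\in\mathcal{I}}$ be $B$-$B$-bimodules with specified projections with reduced free product $(\mathcal{X},\mathring{\mathcal{X}},p)$, and set $\mathcal{A}=\mathcal{L}(\mathcal{X})$, $\mathbb{E}=\mathbb{E}_{\mathcal{L}(\mathcal{X})}$, $\mathcal{A}_{i,\mathcal{F}}=\lambda_i(\mathcal{L}(\mathcal{X}_i))$, $\mathcal{A}_{i,\mathcal{B}}=P_i\lambda_i(\mathcal{L}(\mathcal{X}_i))P_i$. Let $\omega:[n]\to\mathcal{I}$, $\chi:[n]\to\{\mathcal{F},\mathcal{B}\}$ and $a_k\in\mathcal{A}_{\omega(k),\chi(k)}$. If $\chi(n)=\mathcal{B}$, then there exists $T\in\mathcal{A}_{\omega(n),\mathcal{F}}$ such that $\mathbb{E}(a_1\cdots a_n)=\mathbb{E}(a_1\cdots a_{n-1}T)$.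
   Context: $B$ is a unital complex algebra. A $B$-$B$-bimodule with specified projection is a triple $(\mathcal{X},\mathring{\mathcal{X}},p)$ with $\mathcal{X}=B\oplus\mathring{\mathcal{X}}$ a direct sum of $B$-$B$-bimodules and $p(b\oplus\eta)=b$; $\mathcal{L}(\mathcal{X})$ is the algebra of linear operators on $\mathcal{X}$ respecting the bimodule structure and $\mathbb{E}_{\mathcal{L}(\mathcal{X})}(T)=p(T(1_B\oplus0))$. The reduced free product of $\{(\mathcal{X}_i,\mathring{\mathcal{X}}_i,p_i)\}$ is $\mathcal{X}=B\oplus\mathring{\mathcal{X}}$ with $\mathring{\mathcal{X}}=\bigoplus_{n\ge1}\bigoplus_{i_1\ne\cdots\ne i_n}\mathring{\mathcal{X}}_{i_1}\otimes_B\cdots\otimes_B\mathring{\mathcal{X}}_{i_n}$ (consecutive indices distinct) and $p$ the projection onto $B$. For $i\in\mathcal{I}$, $\mathcal{X}(i)=B\oplus\bigoplus_{n\ge1}\bigoplus_{i_1\ne\cdots\ne i_n,\ i_1\ne i}\mathring{\mathcal{X}}_{i_1}\otimes_B\cdots\otimes_B\mathring{\mathcal{X}}_{i_n}$, $V_i:\mathcal{X}\to\mathcal{X}_i\otimes_B\mathcal{X}(i)$ is the natural isomorphism, $\lambda_i(T)=V_i^{-1}(T\otimes I)V_i$ for $T\in\mathcal{L}(\mathcal{X}_i)$, and $P_i$ is the projection of $\mathcal{X}$ onto the summand $B\oplus\mathring{\mathcal{X}}_i$ (zero on all other summands). *)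

theory Defs
  imports Complex_Main
begin

text \<open>A unital complex algebra is modelled as a type 'b of class ring_1 together with a
unital ring homomorphism sc from the complex numbers into the centre of B
(complex scalar multiplication z.b is sc z * b).\<close>

definition complex_alg :: "(complex \<Rightarrow> 'b::ring_1) \<Rightarrow> bool" where
  "complex_alg sc \<longleftrightarrow> sc 1 = 1 \<and> (\<forall>z w. sc (z + w) = sc z + sc w) \<and>
     (\<forall>z w. sc (z * w) = sc z * sc w) \<and> (\<forall>z b. sc z * b = b * sc z)"

text \<open>A B-B-bimodule (the complement part of a bimodule with specified projection):
carrier, zero, addition, left and right B-actions.  Complex scalar multiplication
is the action of sc z (which must agree on both sides).\<close>

record ('b, 'x) bimod =
  carr :: "'x set"
  zer  :: 'x
  addx :: "'x \<Rightarrow> 'x \<Rightarrow> 'x"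
  lact :: "'b \<Rightarrow> 'x \<Rightarrow> 'x"
  ract :: "'x \<Rightarrow> 'b \<Rightarrow> 'x"

definition bimodule :: "(complex \<Rightarrow> 'b::ring_1) \<Rightarrow> ('b, 'x) bimod \<Rightarrow> bool" where
  "bimodule sc M \<longleftrightarrow>
     zer M \<in> carr M \<and>
     (\<forall>x\<in>carr M. \<forall>y\<in>carr M. addx M x y \<in> carr M) \<and>
     (\<forall>x\<in>carr M. \<forall>y\<in>carr M. \<forall>z\<in>carr M. addx M (addx M x y) z = addx M x (addx M y z)) \<and>
     (\<forall>x\<in>carr M. \<forall>y\<in>carr M. addx M x y = addx M y x) \<and>
     (\<forall>x\<in>carr M. addx M (zer M) x = x) \<and>
     (\<forall>x\<in>carr M. \<exists>y\<in>carr M. addx M x y = zer M) \<and>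
     (\<forall>b. \<forall>x\<in>carr M. lact M b x \<in> carr M \<and> ract M x b \<in> carr M) \<and>
     (\<forall>x\<in>carr M. lact M 1 x = x \<and> ract M x 1 = x) \<and>
     (\<forall>b c. \<forall>x\<in>carr M. lact M (b * c) x = lact M b (lact M c x)) \<and>
     (\<forall>b c. \<forall>x\<in>carr M. ract M x (b * c) = ract M (ract M x b) c) \<and>
     (\<forall>b c. \<forall>x\<in>carr M. lact M (b + c) x = addx M (lact M b x) (lact M c x)) \<and>
     (\<forall>b c. \<forall>x\<in>carr M. ract M x (b + c) = addx M (ract M x b) (ract M x c)) \<and>
     (\<forall>b. \<forall>x\<in>carr M. \<forall>y\<in>carr M. lact M b (addx M x y) = addx M (lact M b x) (lact M b y)) \<and>
     (\<forall>b. \<forall>x\<in>carr M. \<forall>y\<in>carr M. ract M (addx M x y) b = addx M (ract M x b) (ract M y b)) \<and>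
     (\<forall>b c. \<forall>x\<in>carr M. lact M b (ract M x c) = ract M (lact M b x) c) \<and>
     (\<forall>z. \<forall>x\<in>carr M. lact M (sc z) x = ract M x (sc z))"

text \<open>Elements of X_i = B \<oplus> X\<ring>_i are pairs (b, \<xi>); p_i(b,\<xi>) = b.
L(X_i): additive maps preserving B \<oplus> X\<ring>_i that commute with the left and right
B-actions (complex linearity follows, since z acts as sc z).\<close>

definition LXi :: "('b::ring_1, 'x) bimod \<Rightarrow> ('b \<times> 'x \<Rightarrow> 'b \<times> 'x) set" where
  "LXi M = {T. (\<forall>c. \<forall>\<xi>\<in>carr M. snd (T (c, \<xi>)) \<in> carr M) \<and>
     (\<forall>c c'. \<forall>\<xi>\<in>carr M. \<forall>\<xi>'\<in>carr M.
        T (c + c', addx M \<xi> \<xi>') = (fst (T (c, \<xi>)) + fst (T (c', \<xi>')), addx M (snd (T (c, \<xi>))) (snd (T (c', \<xi>'))))) \<and>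
     (\<forall>b c. \<forall>\<xi>\<in>carr M. T (b * c, lact M b \<xi>) = (b * fst (T (c, \<xi>)), lact M b (snd (T (c, \<xi>))))) \<and>
     (\<forall>b c. \<forall>\<xi>\<in>carr M. T (c * b, ract M \<xi> b) = (fst (T (c, \<xi>)) * b, ract M (snd (T (c, \<xi>))) b))}"

text \<open>X is realised as the quotient of the complex vector space of finitely supported
formal combinations of generators (c, [(i1,\<xi>1),...,(in,\<xi>n)]) (c in B, \<xi>k in X\<ring>_ik,
consecutive indices distinct), the generator standing for c in B if n = 0 and for
c\<xi>1 \<otimes>_B ... \<otimes>_B \<xi>n otherwise, modulo the relations defining the algebraic tensor
products over B (multilinearity, B-balancing) and absorption of c.\<close>

definition valid_word :: "('i \<Rightarrow> ('b, 'x) bimod) \<Rightarrow> 'i set \<Rightarrow> ('i \<times> 'x) list \<Rightarrow> bool" where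
  "valid_word M I w \<longleftrightarrow> (\<forall>p\<in>set w. fst p \<in> I \<and> snd p \<in> carr (M (fst p))) \<and>
     successively (\<lambda>p q. fst p \<noteq> fst q) w"

definition fsupp :: "('a \<Rightarrow> complex) \<Rightarrow> 'a set" where
  "fsupp f = {p. f p \<noteq> 0}"

definition FS :: "('i \<Rightarrow> ('b, 'x) bimod) \<Rightarrow> 'i set \<Rightarrow> ('b \<times> ('i \<times> 'x) list \<Rightarrow> complex) set" where
  "FS M I = {f. finite (fsupp f) \<and> (\<forall>p\<in>fsupp f. valid_word M I (snd p))}"

definition delta :: "'a \<Rightarrow> 'a \<Rightarrow> complex" where
  "delta p = (\<lambda>q. if q = p then 1 else 0)"

definition fplus :: "('a \<Rightarrow> complex) \<Rightarrow> ('a \<Rightarrow> complex) \<Rightarrow> 'a \<Rightarrow> complex" where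
  "fplus f g = (\<lambda>q. f q + g q)"

definition fminus :: "('a \<Rightarrow> complex) \<Rightarrow> ('a \<Rightarrow> complex) \<Rightarrow> 'a \<Rightarrow> complex" where
  "fminus f g = (\<lambda>q. f q - g q)"

definition fscal :: "complex \<Rightarrow> ('a \<Rightarrow> complex) \<Rightarrow> 'a \<Rightarrow> complex" where
  "fscal z f = (\<lambda>q. z * f q)"

inductive_set relsp :: "(complex \<Rightarrow> 'b::ring_1) \<Rightarrow> ('i \<Rightarrow> ('b, 'x) bimod) \<Rightarrow> 'i set
    \<Rightarrow> ('b \<times> ('i \<times> 'x) list \<Rightarrow> complex) set"
  for sc M I where
  rzero: "(\<lambda>_. 0) \<in> relsp sc M I"
| radd: "f \<in> relsp sc M I \<Longrightarrow> g \<in> relsp sc M I \<Longrightarrow> fplus f g \<in> relsp sc M I"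
| rscal: "f \<in> relsp sc M I \<Longrightarrow> fscal z f \<in> relsp sc M I"
| r1: "valid_word M I w \<Longrightarrow>
     fminus (delta (c + c', w)) (fplus (delta (c, w)) (delta (c', w))) \<in> relsp sc M I"
| r2: "valid_word M I w \<Longrightarrow>
     fminus (delta (sc z * c, w)) (fscal z (delta (c, w))) \<in> relsp sc M I"
| r3: "valid_word M I (u @ (j, x) # v) \<Longrightarrow> y \<in> carr (M j) \<Longrightarrow>
     fminus (delta (c, u @ (j, addx (M j) x y) # v))
       (fplus (delta (c, u @ (j, x) # v)) (delta (c, u @ (j, y) # v))) \<in> relsp sc M I"
| r4: "valid_word M I (u @ (j, x) # v) \<Longrightarrow>
     fminus (delta (c, u @ (j, lact (M j) (sc z) x) # v)) (fscal z (delta (c, u @ (j, x) # v)))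
       \<in> relsp sc M I"
| r5: "valid_word M I (u @ (j, x) # (k, y) # v) \<Longrightarrow>
     fminus (delta (c, u @ (j, ract (M j) x b) # (k, y) # v))
       (delta (c, u @ (j, x) # (k, lact (M k) b y) # v)) \<in> relsp sc M I"
| r6: "valid_word M I ((j, x) # v) \<Longrightarrow>
     fminus (delta (c, (j, x) # v)) (delta (1, (j, lact (M j) c x) # v)) \<in> relsp sc M I"

definition cls :: "(complex \<Rightarrow> 'b::ring_1) \<Rightarrow> ('i \<Rightarrow> ('b, 'x) bimod) \<Rightarrow> 'i set
    \<Rightarrow> ('b \<times> ('i \<times> 'x) list \<Rightarrow> complex) \<Rightarrow> ('b \<times> ('i \<times> 'x) list \<Rightarrow> complex) set" where
  "cls sc M I f = {g \<in> FS M I. fminus g f \<in> relsp sc M I}"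

definition Xsp :: "(complex \<Rightarrow> 'b::ring_1) \<Rightarrow> ('i \<Rightarrow> ('b, 'x) bimod) \<Rightarrow> 'i set
    \<Rightarrow> ('b \<times> ('i \<times> 'x) list \<Rightarrow> complex) set set" where
  "Xsp sc M I = cls sc M I ` FS M I"

definition rep :: "'f set \<Rightarrow> 'f" where
  "rep C = (SOME f. f \<in> C)"

type_synonym ('b, 'i, 'x) xop =
  "('b \<times> ('i \<times> 'x) list \<Rightarrow> complex) set \<Rightarrow> ('b \<times> ('i \<times> 'x) list \<Rightarrow> complex) set"

definition pB :: "(complex \<Rightarrow> 'b::ring_1) \<Rightarrow> ('b \<times> ('i \<times> 'x) list \<Rightarrow> complex) \<Rightarrow> 'b" where
  "pB sc f = (\<Sum>c\<in>{c. f (c, []) \<noteq> 0}. sc (f (c, [])) * c)"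

text \<open>E_{L(X)}(A) = p(A(1_B \<oplus> 0)).\<close>

definition Eop :: "(complex \<Rightarrow> 'b::ring_1) \<Rightarrow> ('i \<Rightarrow> ('b, 'x) bimod) \<Rightarrow> 'i set
    \<Rightarrow> ('b, 'i, 'x) xop \<Rightarrow> 'b" where
  "Eop sc M I A = pB sc (rep (A (cls sc M I (delta (1, [])))))"

text \<open>\<lambda>_i(T) = V_i\<inverse>(T \<otimes> I)V_i, written out on generators: a generator is identified by V_i with
(c \<oplus> 0) \<otimes> w if its word w does not start with i, and with (0 \<oplus> c\<xi>) \<otimes> rest if w = \<xi> # rest with
\<xi> in X\<ring>_i; then T \<otimes> I is applied and the result is mapped back.\<close>

definition lam_gen :: "('i \<Rightarrow> ('b::ring_1, 'x) bimod) \<Rightarrow> 'i \<Rightarrow> ('b \<times> 'x \<Rightarrow> 'b \<times> 'x)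
    \<Rightarrow> 'b \<times> ('i \<times> 'x) list \<Rightarrow> 'b \<times> ('i \<times> 'x) list \<Rightarrow> complex" where
  "lam_gen M i T p =
     (case snd p of
        (j, \<xi>) # rest \<Rightarrow>
          if j = i then
            (let r = T (0, lact (M i) (fst p) \<xi>)
             in fplus (delta (fst r, rest)) (delta (1, (i, snd r) # rest)))
          else
            (let r = T (fst p, zer (M i))
             in fplus (delta (fst r, snd p)) (delta (1, (i, snd r) # snd p)))
      | [] \<Rightarrow>
          (let r = T (fst p, zer (M i))
           in fplus (delta (fst r, [])) (delta (1, [(i, snd r)]))))"

definition liftop :: "('a \<Rightarrow> 'a \<Rightarrow> complex) \<Rightarrow> ('a \<Rightarrow> complex) \<Rightarrow> 'a \<Rightarrow> complex" where
  "liftop g f = (\<lambda>q. \<Sum>p\<in>fsupp f. f p * g p q)"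

definition lam :: "(complex \<Rightarrow> 'b::ring_1) \<Rightarrow> ('i \<Rightarrow> ('b, 'x) bimod) \<Rightarrow> 'i set \<Rightarrow> 'i
    \<Rightarrow> ('b \<times> 'x \<Rightarrow> 'b \<times> 'x) \<Rightarrow> ('b, 'i, 'x) xop" where
  "lam sc M I i T C = cls sc M I (liftop (lam_gen M i T) (rep C))"

text \<open>P_i: projection onto the summand B \<oplus> X\<ring>_i (words of length 0, or of length 1 with index i).\<close>

definition Pproj :: "(complex \<Rightarrow> 'b::ring_1) \<Rightarrow> ('i \<Rightarrow> ('b, 'x) bimod) \<Rightarrow> 'i set \<Rightarrow> 'i
    \<Rightarrow> ('b, 'i, 'x) xop" where
  "Pproj sc M I i C = cls sc M I
     (\<lambda>p. if snd p = [] \<or> (\<exists>x. snd p = [(i, x)]) then rep C p else 0)"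

datatype side = Fside | Bside

definition Alg :: "(complex \<Rightarrow> 'b::ring_1) \<Rightarrow> ('i \<Rightarrow> ('b, 'x) bimod) \<Rightarrow> 'i set \<Rightarrow> 'i \<Rightarrow> side
    \<Rightarrow> ('b, 'i, 'x) xop set" where
  "Alg sc M I i s = (case s of
      Fside \<Rightarrow> lam sc M I i ` LXi (M i)
    | Bside \<Rightarrow> (\<lambda>T. Pproj sc M I i \<circ> lam sc M I i T \<circ> Pproj sc M I i) ` LXi (M i))"

fun prodop :: "(nat \<Rightarrow> ('a \<Rightarrow> 'a)) \<Rightarrow> nat \<Rightarrow> 'a \<Rightarrow> 'a" where
  "prodop a 0 = id"
| "prodop a (Suc m) = prodop a m \<circ> a (Suc m)"

end

theory Submission
  imports Defs
begin

text \<open>The expectation only sees the image of the vacuum \<open>1\<^sub>B \<oplus> 0\<close>. The vacuum lies in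
  the summand \<open>B \<oplus> X\<ring>\<^sub>i\<close>, so \<open>P\<^sub>i\<close> fixes it, and \<open>\<lambda>\<^sub>i(T)\<close> maps it to
  \<open>V\<^sub>i\<inverse>(T(1 \<oplus> 0) \<otimes> 1)\<close>, which lies in \<open>B \<oplus> X\<ring>\<^sub>i\<close> again and is fixed by \<open>P\<^sub>i\<close>.
  Hence \<open>P\<^sub>i \<lambda>\<^sub>i(T) P\<^sub>i\<close> and \<open>\<lambda>\<^sub>i(T)\<close> agree on the vacuum, and \<open>\<lambda>\<^sub>i(T)\<close> can replace
  the last factor. Since \<open>X\<close> is a quotient of formal combinations of words and \<open>P\<^sub>i\<close>,
  \<open>\<lambda>\<^sub>i(T)\<close> are given on representatives, the real work is to show that both map the
  relation space into itself, i.e. that they are well defined on classes.\<close>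

section \<open>Finitely supported formal combinations\<close>

lemma fsupp_fplus: "fsupp (fplus f g) \<subseteq> fsupp f \<union> fsupp g"
  unfolding fsupp_def fplus_def by auto

lemma fsupp_fminus: "fsupp (fminus f g) \<subseteq> fsupp f \<union> fsupp g"
  unfolding fsupp_def fminus_def by auto

lemma fsupp_fscal: "fsupp (fscal z f) \<subseteq> fsupp f"
  unfolding fsupp_def fscal_def by auto

lemma fsupp_delta: "fsupp (delta p) = {p}"
  unfolding fsupp_def delta_def by auto

lemma fsupp_delta_diff_sum: "fsupp (fminus (delta a) (fplus (delta b) (delta c))) \<subseteq> {a, b, c}"
  by (auto simp: fsupp_def fminus_def fplus_def delta_def)

lemma fsupp_delta_diff_scal: "fsupp (fminus (delta a) (fscal z (delta b))) \<subseteq> {a, b}"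
  by (auto simp: fsupp_def fminus_def fscal_def delta_def)

lemma fsupp_delta_diff: "fsupp (fminus (delta a) (delta b)) \<subseteq> {a, b}"
  by (auto simp: fsupp_def fminus_def delta_def)

lemma finite_fsupp_fplus [simp]:
  "finite (fsupp f) \<Longrightarrow> finite (fsupp g) \<Longrightarrow> finite (fsupp (fplus f g))"
  by (meson finite_UnI finite_subset fsupp_fplus)

lemma finite_fsupp_fminus [simp]:
  "finite (fsupp f) \<Longrightarrow> finite (fsupp g) \<Longrightarrow> finite (fsupp (fminus f g))"
  by (meson finite_UnI finite_subset fsupp_fminus)

lemma finite_fsupp_fscal [simp]: "finite (fsupp f) \<Longrightarrow> finite (fsupp (fscal z f))"
  by (meson finite_subset fsupp_fscal)

lemma finite_fsupp_delta [simp]: "finite (fsupp (delta p))"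
  by (simp add: fsupp_delta)

lemma fsupp_zero [simp]: "fsupp (\<lambda>_. 0) = {}"
  unfolding fsupp_def by simp

lemma finite_fsupp_relsp: "f \<in> relsp sc M I \<Longrightarrow> finite (fsupp f)"
  by (induction rule: relsp.induct) simp_all

lemma liftop_eq_sum:
  assumes "finite S" "fsupp f \<subseteq> S"
  shows "liftop g f q = (\<Sum>p\<in>S. f p * g p q)"
  unfolding liftop_def by (rule sum.mono_neutral_left) (use assms in \<open>auto simp: fsupp_def\<close>)

lemma liftop_fplus:
  assumes "finite (fsupp f)" "finite (fsupp h)"
  shows "liftop g (fplus f h) = fplus (liftop g f) (liftop g h)"
proof
  fix q
  let ?S = "fsupp f \<union> fsupp h"
  have "liftop g (fplus f h) q = (\<Sum>p\<in>?S. fplus f h p * g p q)"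
    by (rule liftop_eq_sum) (use assms fsupp_fplus[of f h] in auto)
  also have "\<dots> = liftop g f q + liftop g h q"
    using assms by (simp add: fplus_def distrib_right sum.distrib liftop_eq_sum[of ?S])
  finally show "liftop g (fplus f h) q = fplus (liftop g f) (liftop g h) q"
    unfolding fplus_def .
qed

lemma liftop_fminus:
  assumes "finite (fsupp f)" "finite (fsupp h)"
  shows "liftop g (fminus f h) = fminus (liftop g f) (liftop g h)"
proof
  fix q
  let ?S = "fsupp f \<union> fsupp h"
  have "liftop g (fminus f h) q = (\<Sum>p\<in>?S. fminus f h p * g p q)"
    by (rule liftop_eq_sum) (use assms fsupp_fminus[of f h] in auto)
  also have "\<dots> = liftop g f q - liftop g h q"
    using assms by (simp add: fminus_def left_diff_distrib sum_subtractf liftop_eq_sum[of ?S])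
  finally show "liftop g (fminus f h) q = fminus (liftop g f) (liftop g h) q"
    unfolding fminus_def .
qed

lemma liftop_fscal:
  assumes "finite (fsupp f)"
  shows "liftop g (fscal z f) = fscal z (liftop g f)"
proof
  fix q
  have "liftop g (fscal z f) q = (\<Sum>p\<in>fsupp f. fscal z f p * g p q)"
    by (rule liftop_eq_sum[OF assms fsupp_fscal])
  then show "liftop g (fscal z f) q = fscal z (liftop g f) q"
    by (simp add: fscal_def liftop_def sum_distrib_left mult.assoc)
qed

lemma liftop_delta [simp]: "liftop g (delta p) = g p"
  unfolding liftop_def fsupp_delta by (simp add: delta_def)

lemma liftop_zero: "liftop g (\<lambda>_. 0) = (\<lambda>_. 0)"
  unfolding liftop_def by simp

section \<open>Words, bimodules and the operators in \<open>L(X\<^sub>i)\<close>\<close>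

lemma valid_word_Nil [simp]: "valid_word M I []"
  unfolding valid_word_def by simp

lemma valid_word_Cons:
  "valid_word M I (a # w) \<longleftrightarrow> fst a \<in> I \<and> snd a \<in> carr (M (fst a)) \<and> valid_word M I w \<and>
     (w = [] \<or> fst a \<noteq> fst (hd w))"
  unfolding valid_word_def by (auto simp: successively_Cons)

lemma valid_word_Cons_letter:
  "valid_word M I ((j, x) # w) \<Longrightarrow> y \<in> carr (M j) \<Longrightarrow> valid_word M I ((j, y) # w)"
  by (simp add: valid_word_Cons)

context
  fixes sc :: "complex \<Rightarrow> 'b::ring_1" and N :: "('b, 'x) bimod"
  assumes bimod: "bimodule sc N"
begin

lemma bimodule_zer: "zer N \<in> carr N"
  using bimod unfolding bimodule_def by simp

lemma bimodule_lact: "x \<in> carr N \<Longrightarrow> lact N b x \<in> carr N"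
  using bimod unfolding bimodule_def by simp

lemma bimodule_lact_one: "x \<in> carr N \<Longrightarrow> lact N 1 x = x"
  using bimod unfolding bimodule_def by simp

lemma bimodule_lact_mult: "x \<in> carr N \<Longrightarrow> lact N (b * c) x = lact N b (lact N c x)"
  using bimod unfolding bimodule_def by simp

lemma bimodule_lact_add: "x \<in> carr N \<Longrightarrow> lact N (b + c) x = addx N (lact N b x) (lact N c x)"
  using bimod unfolding bimodule_def by simp

lemma bimodule_lact_addx:
  "x \<in> carr N \<Longrightarrow> y \<in> carr N \<Longrightarrow> lact N b (addx N x y) = addx N (lact N b x) (lact N b y)"
  using bimod unfolding bimodule_def by simp

lemma bimodule_ract_addx:
  "x \<in> carr N \<Longrightarrow> y \<in> carr N \<Longrightarrow> ract N (addx N x y) b = addx N (ract N x b) (ract N y b)"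
  using bimod unfolding bimodule_def by simp

lemma bimodule_lact_ract: "x \<in> carr N \<Longrightarrow> lact N b (ract N x c) = ract N (lact N b x) c"
  using bimod unfolding bimodule_def by simp

lemma bimodule_addx_zer: "addx N (zer N) (zer N) = zer N"
  using bimod unfolding bimodule_def by simp

lemma bimodule_idem_eq_zer:
  assumes y: "y \<in> carr N" and idem: "addx N y y = y"
  shows "y = zer N"
proof -
  have assoc: "\<forall>x\<in>carr N. \<forall>y\<in>carr N. \<forall>z\<in>carr N. addx N (addx N x y) z = addx N x (addx N y z)"
    using bimod unfolding bimodule_def by (elim conjE) assumption
  have comm: "\<forall>x\<in>carr N. \<forall>y\<in>carr N. addx N x y = addx N y x"
    using bimod unfolding bimodule_def by (elim conjE) assumption
  have neutral: "\<forall>x\<in>carr N. addx N (zer N) x = x"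
    using bimod unfolding bimodule_def by (elim conjE) assumption
  have inverse: "\<forall>x\<in>carr N. \<exists>y\<in>carr N. addx N x y = zer N"
    using bimod unfolding bimodule_def by (elim conjE) assumption
  obtain y' where y': "y' \<in> carr N" "addx N y y' = zer N"
    using inverse y by blast
  have "zer N = addx N (addx N y y) y'"
    using idem y' by simp
  also have "\<dots> = addx N y (zer N)"
    using assoc y y' by simp
  also have "\<dots> = y"
    using comm neutral y bimodule_zer by metis
  finally show ?thesis by simp
qed

lemma bimodule_lact_zer: "lact N b (zer N) = zer N"
  by (rule bimodule_idem_eq_zer)
    (simp_all add: bimodule_lact bimodule_zer bimodule_lact_addx[symmetric] bimodule_addx_zer)

lemma bimodule_ract_zer: "ract N (zer N) b = zer N"
proof (rule bimodule_idem_eq_zer)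
  show "ract N (zer N) b \<in> carr N"
    using bimod bimodule_zer unfolding bimodule_def by simp
qed (simp add: bimodule_zer bimodule_ract_addx[symmetric] bimodule_addx_zer)

context
  fixes T :: "'b \<times> 'x \<Rightarrow> 'b \<times> 'x"
  assumes T: "T \<in> LXi N"
begin

lemma LXi_carr: "\<xi> \<in> carr N \<Longrightarrow> snd (T (c, \<xi>)) \<in> carr N"
  using T unfolding LXi_def by blast

lemma LXi_add:
  "\<xi> \<in> carr N \<Longrightarrow> \<xi>' \<in> carr N \<Longrightarrow>
   T (c + c', addx N \<xi> \<xi>') = (fst (T (c, \<xi>)) + fst (T (c', \<xi>')), addx N (snd (T (c, \<xi>))) (snd (T (c', \<xi>'))))"
  using T unfolding LXi_def by blast

lemma LXi_lact: "\<xi> \<in> carr N \<Longrightarrow> T (b * c, lact N b \<xi>) = (b * fst (T (c, \<xi>)), lact N b (snd (T (c, \<xi>))))"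
  using T unfolding LXi_def by blast

lemma LXi_ract: "\<xi> \<in> carr N \<Longrightarrow> T (c * b, ract N \<xi> b) = (fst (T (c, \<xi>)) * b, ract N (snd (T (c, \<xi>))) b)"
  using T unfolding LXi_def by blast

lemma LXi_add_B:
  "T (c + c', zer N) =
   (fst (T (c, zer N)) + fst (T (c', zer N)), addx N (snd (T (c, zer N))) (snd (T (c', zer N))))"
  using LXi_add[OF bimodule_zer bimodule_zer] by (simp add: bimodule_addx_zer)

lemma LXi_lact_B: "T (b * c, zer N) = (b * fst (T (c, zer N)), lact N b (snd (T (c, zer N))))"
  using LXi_lact[OF bimodule_zer] by (simp add: bimodule_lact_zer)

lemma LXi_ract_B: "T (c * b, zer N) = (fst (T (c, zer N)) * b, ract N (snd (T (c, zer N))) b)"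
  using LXi_ract[OF bimodule_zer] by (simp add: bimodule_ract_zer)

lemma LXi_addx_Xring:
  "\<xi> \<in> carr N \<Longrightarrow> \<xi>' \<in> carr N \<Longrightarrow>
   T (0, addx N \<xi> \<xi>') = (fst (T (0, \<xi>)) + fst (T (0, \<xi>')), addx N (snd (T (0, \<xi>))) (snd (T (0, \<xi>'))))"
  using LXi_add[of \<xi> \<xi>' 0 0] by simp

lemma LXi_lact_Xring: "\<xi> \<in> carr N \<Longrightarrow> T (0, lact N b \<xi>) = (b * fst (T (0, \<xi>)), lact N b (snd (T (0, \<xi>))))"
  using LXi_lact[of \<xi> b 0] by simp

lemma LXi_ract_Xring: "\<xi> \<in> carr N \<Longrightarrow> T (0, ract N \<xi> b) = (fst (T (0, \<xi>)) * b, ract N (snd (T (0, \<xi>))) b)"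
  using LXi_ract[of \<xi> 0 b] by simp

end

end

section \<open>\<open>\<lambda>\<^sub>i(T)\<close> and \<open>P\<^sub>i\<close> on representatives\<close>

text \<open>The class of \<open>lam_out i r w\<close> is \<open>V\<^sub>i\<inverse>(r \<otimes> w)\<close> for \<open>r = b \<oplus> \<xi>\<close> in \<open>X\<^sub>i\<close>.\<close>

definition lam_out :: "'i \<Rightarrow> 'b::one \<times> 'x \<Rightarrow> ('i \<times> 'x) list \<Rightarrow> 'b \<times> ('i \<times> 'x) list \<Rightarrow> complex" where
  "lam_out i r w = fplus (delta (fst r, w)) (delta (1, (i, snd r) # w))"

lemma lam_gen_off_head:
  "w = [] \<or> fst (hd w) \<noteq> i \<Longrightarrow> lam_gen M i T (c, w) = lam_out i (T (c, zer (M i))) w"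
  unfolding lam_gen_def lam_out_def by (cases w) (auto simp: Let_def)

lemma lam_gen_head: "lam_gen M i T (c, (i, \<xi>) # w) = lam_out i (T (0, lact (M i) c \<xi>)) w"
  unfolding lam_gen_def lam_out_def by (simp add: Let_def)

definition in_summand :: "'i \<Rightarrow> ('i \<times> 'x) list \<Rightarrow> bool" where
  "in_summand i w \<longleftrightarrow> w = [] \<or> (\<exists>x. w = [(i, x)])"

definition proj_summand :: "'i \<Rightarrow> ('b \<times> ('i \<times> 'x) list \<Rightarrow> complex) \<Rightarrow> 'b \<times> ('i \<times> 'x) list \<Rightarrow> complex" where
  "proj_summand i f = (\<lambda>p. if in_summand i (snd p) then f p else 0)"

lemma in_summand_Nil [simp]: "in_summand i []"
  unfolding in_summand_def by simp

lemma in_summand_Cons [simp]: "in_summand i ((j, x) # v) \<longleftrightarrow> v = [] \<and> j = i"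
  unfolding in_summand_def by auto

lemma in_summand_append_Cons [simp]: "in_summand i (u @ (j, x) # v) \<longleftrightarrow> u = [] \<and> v = [] \<and> j = i"
  unfolding in_summand_def by (cases u) auto

lemma Pproj_eq_proj_summand: "Pproj sc M I i C = cls sc M I (proj_summand i (rep C))"
  unfolding Pproj_def proj_summand_def in_summand_def ..

lemma proj_summand_fplus: "proj_summand i (fplus f g) = fplus (proj_summand i f) (proj_summand i g)"
  unfolding proj_summand_def fplus_def by auto

lemma proj_summand_fminus: "proj_summand i (fminus f g) = fminus (proj_summand i f) (proj_summand i g)"
  unfolding proj_summand_def fminus_def by auto

lemma proj_summand_fscal: "proj_summand i (fscal z f) = fscal z (proj_summand i f)"
  unfolding proj_summand_def fscal_def by auto

lemma delta_FS: "valid_word M I w \<Longrightarrow> delta (c, w) \<in> FS M I"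
  unfolding FS_def by (simp add: fsupp_delta)

lemma lam_out_FS: "valid_word M I ((i, snd r) # w) \<Longrightarrow> lam_out i r w \<in> FS M I"
proof -
  assume valid: "valid_word M I ((i, snd r) # w)"
  have "fsupp (lam_out i r w) \<subseteq> {(fst r, w), (1, (i, snd r) # w)}"
    unfolding lam_out_def by (auto simp: fsupp_def fplus_def delta_def)
  moreover have "valid_word M I w"
    using valid by (simp add: valid_word_Cons)
  ultimately show ?thesis
    using valid finite_subset unfolding FS_def by fastforce
qed

lemma proj_summand_delta_Nil: "proj_summand i (delta (c, [])) = delta (c, [])"
  by (auto simp: fun_eq_iff proj_summand_def delta_def)

lemma proj_summand_lam_out_Nil: "proj_summand i (lam_out i r []) = lam_out i r []"
  by (auto simp: fun_eq_iff proj_summand_def lam_out_def fplus_def delta_def)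

section \<open>The relations of the free product\<close>

locale formal_words =
  fixes sc :: "complex \<Rightarrow> 'b::ring_1" and M :: "'i \<Rightarrow> ('b, 'x) bimod" and I :: "'i set"
begin

definition releq :: "('b \<times> ('i \<times> 'x) list \<Rightarrow> complex) \<Rightarrow> ('b \<times> ('i \<times> 'x) list \<Rightarrow> complex) \<Rightarrow> bool"
    (infix "\<approx>" 50) where
  "f \<approx> g \<longleftrightarrow> fminus f g \<in> relsp sc M I"

lemma releq_refl: "f \<approx> f"
proof -
  have "fminus f f = (\<lambda>_. 0)"
    unfolding fminus_def by simp
  then show ?thesis
    unfolding releq_def by (simp add: relsp.rzero)
qed

lemma releq_sym: "f \<approx> g \<Longrightarrow> g \<approx> f"
  unfolding releq_def
  by (drule relsp.rscal[where z = "-1"]) (simp add: fscal_def fminus_def)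

lemma releq_trans: "f \<approx> g \<Longrightarrow> g \<approx> h \<Longrightarrow> f \<approx> h"
  unfolding releq_def
  by (drule (1) relsp.radd) (simp add: fplus_def fminus_def)

lemma releq_fplus: "f \<approx> f' \<Longrightarrow> g \<approx> g' \<Longrightarrow> fplus f g \<approx> fplus f' g'"
  unfolding releq_def
  by (drule (1) relsp.radd) (simp add: fplus_def fminus_def algebra_simps)

lemma cls_eq_if_releq: "f \<approx> g \<Longrightarrow> cls sc M I f = cls sc M I g"
  unfolding cls_def releq_def[symmetric] using releq_trans releq_sym by blast

lemma releq_coeff_add: "valid_word M I w \<Longrightarrow> delta (c + c', w) \<approx> fplus (delta (c, w)) (delta (c', w))"
  unfolding releq_def by (rule relsp.r1)

lemma releq_coeff_scal: "valid_word M I w \<Longrightarrow> delta (sc z * c, w) \<approx> fscal z (delta (c, w))"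
  unfolding releq_def by (rule relsp.r2)

lemma releq_letter_add:
  "valid_word M I (u @ (j, x) # v) \<Longrightarrow> y \<in> carr (M j) \<Longrightarrow>
   delta (c, u @ (j, addx (M j) x y) # v) \<approx> fplus (delta (c, u @ (j, x) # v)) (delta (c, u @ (j, y) # v))"
  unfolding releq_def by (rule relsp.r3)

lemma releq_letter_scal:
  "valid_word M I (u @ (j, x) # v) \<Longrightarrow>
   delta (c, u @ (j, lact (M j) (sc z) x) # v) \<approx> fscal z (delta (c, u @ (j, x) # v))"
  unfolding releq_def by (rule relsp.r4)

lemma releq_balanced:
  "valid_word M I (u @ (j, x) # (k, y) # v) \<Longrightarrow>
   delta (c, u @ (j, ract (M j) x b) # (k, y) # v) \<approx> delta (c, u @ (j, x) # (k, lact (M k) b y) # v)"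
  unfolding releq_def by (rule relsp.r5)

lemma releq_absorb: "valid_word M I ((j, x) # v) \<Longrightarrow> delta (c, (j, x) # v) \<approx> delta (1, (j, lact (M j) c x) # v)"
  unfolding releq_def by (rule relsp.r6)

lemma releq_lam_out_add:
  assumes "valid_word M I ((i, snd r) # w)" "snd r' \<in> carr (M i)"
  shows "lam_out i (fst r + fst r', addx (M i) (snd r) (snd r')) w \<approx>
    fplus (lam_out i r w) (lam_out i r' w)"
proof -
  have "valid_word M I w"
    using assms(1) by (simp add: valid_word_Cons)
  from releq_fplus[OF releq_coeff_add[OF this] releq_letter_add[OF _ assms(2), where u = "[]"]]
  show ?thesis
    using assms(1) by (simp add: lam_out_def fplus_def algebra_simps)
qed

lemma releq_lam_out_scal:
  assumes "valid_word M I ((i, snd r) # w)"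
  shows "lam_out i (sc z * fst r, lact (M i) (sc z) (snd r)) w \<approx> fscal z (lam_out i r w)"
proof -
  have "valid_word M I w"
    using assms by (simp add: valid_word_Cons)
  from releq_fplus[OF releq_coeff_scal[OF this] releq_letter_scal[where u = "[]"]]
  show ?thesis
    using assms by (simp add: lam_out_def fplus_def fscal_def algebra_simps)
qed

lemma releq_lam_out_letter_add:
  assumes "valid_word M I ((i, snd r) # u @ (j, x) # v)" "y \<in> carr (M j)"
  shows "lam_out i r (u @ (j, addx (M j) x y) # v) \<approx>
    fplus (lam_out i r (u @ (j, x) # v)) (lam_out i r (u @ (j, y) # v))"
proof -
  have "valid_word M I (u @ (j, x) # v)"
    using assms(1) by (simp add: valid_word_Cons)
  from releq_fplus[OF releq_letter_add[OF this assms(2)]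
      releq_letter_add[OF _ assms(2), where u = "(i, snd r) # u"]]
  show ?thesis
    using assms(1) by (simp add: lam_out_def fplus_def algebra_simps)
qed

lemma releq_lam_out_letter_scal:
  assumes "valid_word M I ((i, snd r) # u @ (j, x) # v)"
  shows "lam_out i r (u @ (j, lact (M j) (sc z) x) # v) \<approx> fscal z (lam_out i r (u @ (j, x) # v))"
proof -
  have "valid_word M I (u @ (j, x) # v)"
    using assms by (simp add: valid_word_Cons)
  from releq_fplus[OF releq_letter_scal[OF this] releq_letter_scal[where u = "(i, snd r) # u"]]
  show ?thesis
    using assms by (simp add: lam_out_def fplus_def fscal_def algebra_simps)
qed

lemma releq_lam_out_balanced:
  assumes "valid_word M I ((i, snd r) # u @ (j, x) # (k, y) # v)"
  shows "lam_out i r (u @ (j, ract (M j) x b) # (k, y) # v) \<approx>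
    lam_out i r (u @ (j, x) # (k, lact (M k) b y) # v)"
proof -
  have "valid_word M I (u @ (j, x) # (k, y) # v)"
    using assms by (simp add: valid_word_Cons)
  from releq_fplus[OF releq_balanced[OF this] releq_balanced[where u = "(i, snd r) # u"]]
  show ?thesis
    using assms by (simp add: lam_out_def)
qed

lemma releq_lam_out_move_coeff:
  assumes valid: "valid_word M I ((i, snd r) # (k, y) # v)" and bimod: "bimodule sc (M k)"
  shows "lam_out i (fst r * b, ract (M i) (snd r) b) ((k, y) # v) \<approx>
    lam_out i r ((k, lact (M k) b y) # v)"
proof -
  have tail: "valid_word M I ((k, y) # v)" and y: "y \<in> carr (M k)"
    using valid by (simp_all add: valid_word_Cons)
  have "valid_word M I ((k, lact (M k) b y) # v)"
    using valid_word_Cons_letter[OF tail bimodule_lact[OF bimod y]] .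
  then have "delta (fst r, (k, lact (M k) b y) # v) \<approx> delta (1, (k, lact (M k) (fst r * b) y) # v)"
    using releq_absorb by (simp add: bimodule_lact_mult[OF bimod y])
  then have coeff: "delta (fst r * b, (k, y) # v) \<approx> delta (fst r, (k, lact (M k) b y) # v)"
    using releq_absorb[OF tail] releq_trans releq_sym by blast
  have "delta (1, (i, ract (M i) (snd r) b) # (k, y) # v) \<approx>
    delta (1, (i, snd r) # (k, lact (M k) b y) # v)"
    using releq_balanced[where u = "[]"] valid by simp
  from releq_fplus[OF coeff this] show ?thesis
    by (simp add: lam_out_def)
qed

lemma proj_summand_homogeneous_relsp:
  assumes "G \<in> relsp sc M I" "fsupp G \<subseteq> S"
    and "\<forall>p\<in>S. \<forall>q\<in>S. in_summand i (snd p) = in_summand i (snd q)"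
  shows "proj_summand i G \<in> relsp sc M I"
proof (cases "\<exists>p\<in>fsupp G. in_summand i (snd p)")
  case True
  then obtain q where "q \<in> S" "in_summand i (snd q)"
    using assms(2) by blast
  have "G p = 0" if "\<not> in_summand i (snd p)" for p
  proof (rule ccontr)
    assume "G p \<noteq> 0"
    then have "p \<in> S"
      using assms(2) unfolding fsupp_def by blast
    with \<open>q \<in> S\<close> \<open>in_summand i (snd q)\<close> that assms(3) show False
      by blast
  qed
  then have "proj_summand i G = G"
    unfolding proj_summand_def by (auto simp: fun_eq_iff)
  with assms(1) show ?thesis by simp
next
  case False
  then have "proj_summand i G = (\<lambda>_. 0)"
    unfolding proj_summand_def fsupp_def by (auto simp: fun_eq_iff)
  then show ?thesis by (simp add: relsp.rzero)
qed

lemma proj_summand_relsp: "f \<in> relsp sc M I \<Longrightarrow> proj_summand i f \<in> relsp sc M I"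
proof (induction rule: relsp.induct)
  case rzero
  then show ?case by (simp add: proj_summand_def relsp.rzero)
next
  case (radd f g)
  then show ?case by (simp add: proj_summand_fplus relsp.radd)
next
  case (rscal f z)
  then show ?case by (simp add: proj_summand_fscal relsp.rscal)
next
  case (r1 w c c')
  show ?case by (rule proj_summand_homogeneous_relsp[OF relsp.r1[OF r1] fsupp_delta_diff_sum]) simp
next
  case (r2 w z c)
  show ?case by (rule proj_summand_homogeneous_relsp[OF relsp.r2[OF r2] fsupp_delta_diff_scal]) simp
next
  case (r3 u j x v y c)
  show ?case by (rule proj_summand_homogeneous_relsp[OF relsp.r3[OF r3] fsupp_delta_diff_sum]) simp
next
  case (r4 u j x v c z)
  show ?case by (rule proj_summand_homogeneous_relsp[OF relsp.r4[OF r4] fsupp_delta_diff_scal]) simp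
next
  case (r5 u j x k y v c b)
  show ?case by (rule proj_summand_homogeneous_relsp[OF relsp.r5[OF r5] fsupp_delta_diff]) simp
next
  case (r6 j x v c)
  show ?case by (rule proj_summand_homogeneous_relsp[OF relsp.r6[OF r6] fsupp_delta_diff]) simp
qed

lemma rep_cls: "f \<in> FS M I \<Longrightarrow> rep (cls sc M I f) \<in> FS M I \<and> rep (cls sc M I f) \<approx> f"
proof -
  assume "f \<in> FS M I"
  then have "f \<in> cls sc M I f"
    unfolding cls_def using releq_refl[of f] by (simp add: releq_def)
  then have "rep (cls sc M I f) \<in> cls sc M I f"
    unfolding rep_def by (rule someI[where P = "\<lambda>g. g \<in> cls sc M I f"])
  then show ?thesis
    unfolding cls_def releq_def by simp
qed

lemma Pproj_cls: "f \<in> FS M I \<Longrightarrow> Pproj sc M I i (cls sc M I f) = cls sc M I (proj_summand i f)"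
  unfolding Pproj_eq_proj_summand
  by (intro cls_eq_if_releq)
    (use proj_summand_relsp rep_cls in \<open>simp add: releq_def proj_summand_fminus[symmetric]\<close>)

end

section \<open>The operators \<open>\<lambda>\<^sub>i(T)\<close> respect the relations\<close>

locale free_product_operator = formal_words sc M I
  for sc :: "complex \<Rightarrow> 'b::ring_1" and M :: "'i \<Rightarrow> ('b, 'x) bimod" and I :: "'i set" +
  fixes i :: 'i and T :: "'b \<times> 'x \<Rightarrow> 'b \<times> 'x"
  assumes complex_alg: "complex_alg sc"
    and bimodule_M: "\<And>j. j \<in> I \<Longrightarrow> bimodule sc (M j)"
    and i_in_I: "i \<in> I" and T_in_LXi: "T \<in> LXi (M i)"
begin

lemma bimodule_Mi: "bimodule sc (M i)"
  using bimodule_M[OF i_in_I] .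

lemma T_carr: "\<xi> \<in> carr (M i) \<Longrightarrow> snd (T (c, \<xi>)) \<in> carr (M i)"
  using LXi_carr[OF bimodule_Mi T_in_LXi] .

lemma T_zer_carr: "snd (T (c, zer (M i))) \<in> carr (M i)"
  using T_carr[OF bimodule_zer[OF bimodule_Mi]] .

lemma valid_word_Cons_i: "valid_word M I w \<Longrightarrow> w = [] \<or> fst (hd w) \<noteq> i \<Longrightarrow> s \<in> carr (M i) \<Longrightarrow>
    valid_word M I ((i, s) # w)"
  using i_in_I by (auto simp: valid_word_Cons)

lemma word_head_cases:
  obtains (off_head) "w = [] \<or> fst (hd w) \<noteq> i" | (head) \<xi> w' where "w = (i, \<xi>) # w'"
  by (cases w) force+

text \<open>A relation acting strictly inside a word (not on a leading letter from \<open>X\<ring>\<^sub>i\<close>) is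
  untouched by \<open>\<lambda>\<^sub>i(T)\<close>: the leading part is processed the same way for all words involved.\<close>

lemma lam_gen_inner:
  assumes valid: "valid_word M I (u @ (j, x) # t)" and inner: "u \<noteq> [] \<or> j \<noteq> i"
  obtains r u' where "\<And>z t'. lam_gen M i T (c, u @ (j, z) # t') = lam_out i r (u' @ (j, z) # t')"
    and "valid_word M I ((i, snd r) # u' @ (j, x) # t)"
proof (cases "u @ (j, x) # t" rule: word_head_cases)
  case off_head
  have "\<And>z t'. lam_gen M i T (c, u @ (j, z) # t') = lam_out i (T (c, zer (M i))) (u @ (j, z) # t')"
    using off_head by (intro lam_gen_off_head) (cases u; simp)
  moreover have "valid_word M I ((i, snd (T (c, zer (M i)))) # u @ (j, x) # t)"
    using valid off_head T_zer_carr by (rule valid_word_Cons_i)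
  ultimately show ?thesis by (rule that)
next
  case (head \<xi> w')
  with inner obtain u' where u: "u = (i, \<xi>) # u'"
    by (cases u) auto
  have \<xi>: "\<xi> \<in> carr (M i)"
    using valid u by (simp add: valid_word_Cons)
  have "\<And>z t'. lam_gen M i T (c, u @ (j, z) # t') = lam_out i (T (0, lact (M i) c \<xi>)) (u' @ (j, z) # t')"
    using u by (simp add: lam_gen_head)
  moreover have "valid_word M I ((i, snd (T (0, lact (M i) c \<xi>))) # u' @ (j, x) # t)"
    using valid u T_carr[OF bimodule_lact[OF bimodule_Mi \<xi>]] by (simp add: valid_word_Cons)
  ultimately show ?thesis by (rule that)
qed

lemma releq_lam_gen_coeff_add:
  assumes valid: "valid_word M I w"
  shows "lam_gen M i T (c + c', w) \<approx> fplus (lam_gen M i T (c, w)) (lam_gen M i T (c', w))"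
proof (cases w rule: word_head_cases)
  case off_head
  have "valid_word M I ((i, snd (T (c, zer (M i)))) # w)"
    using valid off_head T_zer_carr by (rule valid_word_Cons_i)
  from releq_lam_out_add[OF this T_zer_carr] show ?thesis
    using off_head by (simp add: lam_gen_off_head LXi_add_B[OF bimodule_Mi T_in_LXi])
next
  case (head \<xi> w')
  have \<xi>: "\<xi> \<in> carr (M i)"
    using valid head by (simp add: valid_word_Cons)
  have \<eta>: "lact (M i) b \<xi> \<in> carr (M i)" for b
    using bimodule_lact[OF bimodule_Mi \<xi>] .
  have "valid_word M I ((i, snd (T (0, lact (M i) c \<xi>))) # w')"
    using valid head T_carr[OF \<eta>] by (simp add: valid_word_Cons)
  from releq_lam_out_add[OF this T_carr[OF \<eta>]] show ?thesis
    using head by (simp add: lam_gen_head bimodule_lact_add[OF bimodule_Mi \<xi>]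
        LXi_addx_Xring[OF bimodule_Mi T_in_LXi \<eta> \<eta>])
qed

lemma releq_lam_gen_coeff_scal:
  assumes valid: "valid_word M I w"
  shows "lam_gen M i T (sc z * c, w) \<approx> fscal z (lam_gen M i T (c, w))"
proof (cases w rule: word_head_cases)
  case off_head
  have "valid_word M I ((i, snd (T (c, zer (M i)))) # w)"
    using valid off_head T_zer_carr by (rule valid_word_Cons_i)
  from releq_lam_out_scal[OF this] show ?thesis
    using off_head by (simp add: lam_gen_off_head LXi_lact_B[OF bimodule_Mi T_in_LXi])
next
  case (head \<xi> w')
  have \<xi>: "\<xi> \<in> carr (M i)"
    using valid head by (simp add: valid_word_Cons)
  have \<eta>: "lact (M i) c \<xi> \<in> carr (M i)"
    using bimodule_lact[OF bimodule_Mi \<xi>] .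
  have "valid_word M I ((i, snd (T (0, lact (M i) c \<xi>))) # w')"
    using valid head T_carr[OF \<eta>] by (simp add: valid_word_Cons)
  from releq_lam_out_scal[OF this] show ?thesis
    using head by (simp add: lam_gen_head bimodule_lact_mult[OF bimodule_Mi \<xi>]
        LXi_lact_Xring[OF bimodule_Mi T_in_LXi \<eta>])
qed

lemma releq_lam_gen_letter_add:
  assumes valid: "valid_word M I (u @ (j, x) # v)" and y: "y \<in> carr (M j)"
  shows "lam_gen M i T (c, u @ (j, addx (M j) x y) # v) \<approx>
    fplus (lam_gen M i T (c, u @ (j, x) # v)) (lam_gen M i T (c, u @ (j, y) # v))"
proof (cases "u = [] \<and> j = i")
  case True
  have x: "x \<in> carr (M i)" and y: "y \<in> carr (M i)"
    using valid y True by (simp_all add: valid_word_Cons)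
  have \<eta>: "lact (M i) c \<zeta> \<in> carr (M i)" if "\<zeta> \<in> carr (M i)" for \<zeta>
    using bimodule_lact[OF bimodule_Mi that] .
  have "valid_word M I ((i, snd (T (0, lact (M i) c x))) # v)"
    using valid True T_carr[OF \<eta>[OF x]] by (simp add: valid_word_Cons)
  from releq_lam_out_add[OF this T_carr[OF \<eta>[OF y]]] show ?thesis
    using True by (simp add: lam_gen_head bimodule_lact_addx[OF bimodule_Mi x y]
        LXi_addx_Xring[OF bimodule_Mi T_in_LXi \<eta>[OF x] \<eta>[OF y]])
next
  case False
  then obtain r u' where "\<And>z t'. lam_gen M i T (c, u @ (j, z) # t') = lam_out i r (u' @ (j, z) # t')"
    and "valid_word M I ((i, snd r) # u' @ (j, x) # v)"
    using lam_gen_inner[OF valid] by blast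
  with releq_lam_out_letter_add[OF _ y] show ?thesis by simp
qed

lemma releq_lam_gen_letter_scal:
  assumes valid: "valid_word M I (u @ (j, x) # v)"
  shows "lam_gen M i T (c, u @ (j, lact (M j) (sc z) x) # v) \<approx>
    fscal z (lam_gen M i T (c, u @ (j, x) # v))"
proof (cases "u = [] \<and> j = i")
  case True
  have x: "x \<in> carr (M i)"
    using valid True by (simp add: valid_word_Cons)
  have \<eta>: "lact (M i) c x \<in> carr (M i)"
    using bimodule_lact[OF bimodule_Mi x] .
  have "c * sc z = sc z * c"
    using complex_alg unfolding complex_alg_def by simp
  then have central: "lact (M i) c (lact (M i) (sc z) x) = lact (M i) (sc z) (lact (M i) c x)"
    by (metis bimodule_lact_mult[OF bimodule_Mi x])
  have "valid_word M I ((i, snd (T (0, lact (M i) c x))) # v)"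
    using valid True T_carr[OF \<eta>] by (simp add: valid_word_Cons)
  from releq_lam_out_scal[OF this] show ?thesis
    using True by (simp add: lam_gen_head central LXi_lact_Xring[OF bimodule_Mi T_in_LXi \<eta>])
next
  case False
  then obtain r u' where "\<And>z t'. lam_gen M i T (c, u @ (j, z) # t') = lam_out i r (u' @ (j, z) # t')"
    and "valid_word M I ((i, snd r) # u' @ (j, x) # v)"
    using lam_gen_inner[OF valid] by blast
  with releq_lam_out_letter_scal show ?thesis by simp
qed

lemma releq_lam_gen_balanced:
  assumes valid: "valid_word M I (u @ (j, x) # (k, y) # v)"
  shows "lam_gen M i T (c, u @ (j, ract (M j) x b) # (k, y) # v) \<approx>
    lam_gen M i T (c, u @ (j, x) # (k, lact (M k) b y) # v)"
proof (cases "u = [] \<and> j = i")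
  case True
  have x: "x \<in> carr (M i)" and k: "k \<in> I"
    using valid True by (simp_all add: valid_word_Cons)
  have \<eta>: "lact (M i) c x \<in> carr (M i)"
    using bimodule_lact[OF bimodule_Mi x] .
  have "valid_word M I ((i, snd (T (0, lact (M i) c x))) # (k, y) # v)"
    using valid True T_carr[OF \<eta>] by (simp add: valid_word_Cons)
  from releq_lam_out_move_coeff[OF this bimodule_M[OF k]] show ?thesis
    using True by (simp add: lam_gen_head bimodule_lact_ract[OF bimodule_Mi x]
        LXi_ract_Xring[OF bimodule_Mi T_in_LXi \<eta>])
next
  case False
  then obtain r u' where "\<And>z t'. lam_gen M i T (c, u @ (j, z) # t') = lam_out i r (u' @ (j, z) # t')"
    and "valid_word M I ((i, snd r) # u' @ (j, x) # (k, y) # v)"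
    using lam_gen_inner[OF valid] by blast
  with releq_lam_out_balanced show ?thesis by simp
qed

lemma releq_lam_gen_absorb:
  assumes valid: "valid_word M I ((j, x) # v)"
  shows "lam_gen M i T (c, (j, x) # v) \<approx> lam_gen M i T (1, (j, lact (M j) c x) # v)"
proof (cases "j = i")
  case True
  have x: "x \<in> carr (M i)"
    using valid True by (simp add: valid_word_Cons)
  have "lact (M i) 1 (lact (M i) c x) = lact (M i) c x"
    using bimodule_lact_one[OF bimodule_Mi bimodule_lact[OF bimodule_Mi x]] .
  with True show ?thesis
    by (simp add: lam_gen_head releq_refl)
next
  case False
  have j: "j \<in> I"
    using valid by (simp add: valid_word_Cons)
  have "valid_word M I ((i, snd (T (1, zer (M i)))) # (j, x) # v)"
    using valid False T_zer_carr by (intro valid_word_Cons_i) simp_all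
  from releq_lam_out_move_coeff[OF this bimodule_M[OF j]] show ?thesis
    using False LXi_ract_B[OF bimodule_Mi T_in_LXi, of 1 c] by (simp add: lam_gen_off_head)
qed

lemma liftop_lam_gen_relsp: "f \<in> relsp sc M I \<Longrightarrow> liftop (lam_gen M i T) f \<in> relsp sc M I"
proof (induction rule: relsp.induct)
  case rzero
  then show ?case by (simp add: liftop_zero relsp.rzero)
next
  case (radd f g)
  then show ?case by (simp add: liftop_fplus finite_fsupp_relsp relsp.radd)
next
  case (rscal f z)
  then show ?case by (simp add: liftop_fscal finite_fsupp_relsp relsp.rscal)
next
  case (r1 w c c')
  then show ?case
    using releq_lam_gen_coeff_add by (simp add: releq_def liftop_fminus liftop_fplus)
next
  case (r2 w z c)
  then show ?case
    using releq_lam_gen_coeff_scal by (simp add: releq_def liftop_fminus liftop_fscal)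
next
  case (r3 u j x v y c)
  then show ?case
    using releq_lam_gen_letter_add by (simp add: releq_def liftop_fminus liftop_fplus)
next
  case (r4 u j x v c z)
  then show ?case
    using releq_lam_gen_letter_scal by (simp add: releq_def liftop_fminus liftop_fscal)
next
  case (r5 u j x k y v c b)
  then show ?case
    using releq_lam_gen_balanced by (simp add: releq_def liftop_fminus)
next
  case (r6 j x v c)
  then show ?case
    using releq_lam_gen_absorb by (simp add: releq_def liftop_fminus)
qed

lemma lam_cls: "f \<in> FS M I \<Longrightarrow> lam sc M I i T (cls sc M I f) = cls sc M I (liftop (lam_gen M i T) f)"
proof -
  assume f: "f \<in> FS M I"
  then have "finite (fsupp (rep (cls sc M I f)))" "finite (fsupp f)"
    using rep_cls[OF f] by (simp_all add: FS_def)
  then show ?thesis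
    unfolding lam_def
    by (intro cls_eq_if_releq)
      (use liftop_lam_gen_relsp rep_cls[OF f] in \<open>simp add: releq_def liftop_fminus[symmetric]\<close>)
qed

lemma Pproj_lam_Pproj_vacuum:
  "Pproj sc M I i (lam sc M I i T (Pproj sc M I i (cls sc M I (delta (1, []))))) =
   lam sc M I i T (cls sc M I (delta (1, [])))"
proof -
  have vacuum: "Pproj sc M I i (cls sc M I (delta (1, []))) = cls sc M I (delta (1, []))"
    by (simp add: Pproj_cls delta_FS proj_summand_delta_Nil)
  have image:
    "lam sc M I i T (cls sc M I (delta (1, []))) = cls sc M I (lam_out i (T (1, zer (M i))) [])"
    by (simp add: lam_cls delta_FS lam_gen_off_head)
  have "lam_out i (T (1, zer (M i))) [] \<in> FS M I"
    using i_in_I T_zer_carr by (intro lam_out_FS) (simp add: valid_word_Cons)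
  then show ?thesis
    by (simp add: vacuum image Pproj_cls proj_summand_lam_out_Nil)
qed

end

theorem lemma4p8:
  fixes sc :: "complex \<Rightarrow> 'b::ring_1"
    and M :: "'i \<Rightarrow> ('b, 'x) bimod"
    and I :: "'i set"
    and n :: nat
    and \<omega> :: "nat \<Rightarrow> 'i"
    and \<chi> :: "nat \<Rightarrow> side"
    and a :: "nat \<Rightarrow> ('b, 'i, 'x) xop"
  assumes "complex_alg sc"
    and "\<forall>i\<in>I. bimodule sc (M i)"
    and "1 \<le> n"
    and "\<forall>k\<in>{1..n}. \<omega> k \<in> I"
    and "\<forall>k\<in>{1..n}. a k \<in> Alg sc M I (\<omega> k) (\<chi> k)"
    and "\<chi> n = Bside"
  shows "\<exists>T\<in>Alg sc M I (\<omega> n) Fside.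
           Eop sc M I (prodop a n) = Eop sc M I (prodop a (n - 1) \<circ> T)"
proof -
  have n: "n \<in> {1..n}"
    using assms(3) by simp
  then have "a n \<in> Alg sc M I (\<omega> n) Bside"
    using assms(5,6) by metis
  then obtain T where T: "T \<in> LXi (M (\<omega> n))"
    and a_n: "a n = Pproj sc M I (\<omega> n) \<circ> lam sc M I (\<omega> n) T \<circ> Pproj sc M I (\<omega> n)"
    unfolding Alg_def by auto
  interpret free_product_operator sc M I "\<omega> n" T
    using assms(1,2,4) n T by unfold_locales auto
  have "prodop a n = prodop a (n - 1) \<circ> a n"
    using assms(3) by (cases n) auto
  then have "Eop sc M I (prodop a n) = Eop sc M I (prodop a (n - 1) \<circ> lam sc M I (\<omega> n) T)"
    unfolding Eop_def by (simp add: a_n Pproj_lam_Pproj_vacuum)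
  moreover have "lam sc M I (\<omega> n) T \<in> Alg sc M I (\<omega> n) Fside"
    unfolding Alg_def using T by simp
  ultimately show ?thesis by blast
qed

end
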